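(* Let $n\in\{2,3\}$, let $D=\bigcup_{m=1}^{M}D_m\subset\mathbb{R}^n$ be a finite union of bounded domains with pairwise disjoint closures, let $k_{max}>0$, let $d\in S^{n-1}$ be a given direction, let $f\in L^2(\mathbb{R}^n)$ vanish outside $D$, and let $F(y,k)=f(y)e^{iky\cdot d}$. The far field pattern is $$u^\infty(\theta,k)=\int_D e^{-ik\theta\cdot y}F(y,k)\,dy=\int_D e^{-ik(\theta-d)\cdot y}f(y)\,dy,\qquad \theta\in S^{n-1},\ k\in(0,k_{max}).$$ Fix an observation direction $\theta\in S^{n-1}$ with $\theta\neq d$ and set $\theta_d:=(\theta-d)/|\theta-d|$. Assume that the set $$\{\tau\in\mathbb{R}\,:\,\Pi_\tau\subset S_D(\theta_d),\ \hat f(\tau)=0\}$$ has Lebesgue measure zero. Then the strip $S_D(\theta_d)$ (the strip with normal direction $\theta-d$) is uniquely determined by the far field data $u^\infty(\theta,k)$, $k\in(0,k_{max})$; that is, if $D'$, $f'$ is a second pair satisfying the same hypotheses (with the same $d$ and $\theta$) and $u^\infty(\theta,k)=u'^\infty(\theta,k)$ for all $k\in(0,k_{max})$, then $S_D(\theta_d)=S_{D'}(\theta_d)$.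
   Context: For $\tau\in\mathbb{R}$, $\Pi_\tau:=\{y\in\mathbb{R}^n: y\cdot\theta_d+\tau=0\}$, $\hat f(\tau):=\int_{\Pi_\tau}f(y)\,ds(y)$, and for a unit vector $\omega$, $S_D(\omega):=\{y\in\mathbb{R}^n:\ \inf_{z\in D}z\cdot\omega\le y\cdot\omega\le\sup_{z\in D}z\cdot\omega\}$. *)

theory Defs
  imports "HOL-Analysis.Analysis"
begin

definition hplane :: "real^'n \<Rightarrow> real \<Rightarrow> (real^'n) set" where
  "hplane \<omega> \<tau> = {y. y \<bullet> \<omega> + \<tau> = 0}"

text \<open>Surface (n-1 dimensional Lebesgue) integral over the hyperplane \<open>\<Pi>_\<tau>\<close> for a unit
  normal \<omega>: the image of Lebesgue measure on R^(n-1) (the coordinates other than a fixed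
  index i0) under an affine isometry onto the hyperplane.\<close>
definition hplane_integral :: "real^'n \<Rightarrow> real \<Rightarrow> (real^'n \<Rightarrow> complex) \<Rightarrow> complex" where
  "hplane_integral \<omega> \<tau> f =
     (let i0 = (SOME i::'n. True);
          Q = (SOME Q::real^'n\<Rightarrow>real^'n. orthogonal_transformation Q \<and> Q (axis i0 1) = \<omega>)
      in integral\<^sup>L (Pi\<^sub>M (UNIV - {i0}) (\<lambda>_. lborel))
           (\<lambda>x::'n\<Rightarrow>real. f (Q (\<chi> i. if i = i0 then - \<tau> else x i))))"

definition fhat :: "real^'n \<Rightarrow> (real^'n \<Rightarrow> complex) \<Rightarrow> real \<Rightarrow> complex" where
  "fhat \<omega> f \<tau> = hplane_integral \<omega> \<tau> f"

definition strip :: "(real^'n) set \<Rightarrow> real^'n \<Rightarrow> (real^'n) set" where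
  "strip D \<omega> = {y. (INF z\<in>D. z \<bullet> \<omega>) \<le> y \<bullet> \<omega> \<and> y \<bullet> \<omega> \<le> (SUP z\<in>D. z \<bullet> \<omega>)}"

definition bounded_domain :: "(real^'n) set \<Rightarrow> bool" where
  "bounded_domain U \<longleftrightarrow> U \<noteq> {} \<and> open U \<and> connected U \<and> bounded U"

definition admissible_domain :: "(nat \<Rightarrow> (real^'n) set) \<Rightarrow> nat \<Rightarrow> bool" where
  "admissible_domain Ds M \<longleftrightarrow> M \<ge> 1 \<and> (\<forall>m\<in>{1..M}. bounded_domain (Ds m)) \<and>
     (\<forall>m\<in>{1..M}. \<forall>m'\<in>{1..M}. m \<noteq> m' \<longrightarrow> closure (Ds m) \<inter> closure (Ds m') = {})"

definition union_dom :: "(nat \<Rightarrow> (real^'n) set) \<Rightarrow> nat \<Rightarrow> (real^'n) set" where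
  "union_dom Ds M = (\<Union>m\<in>{1..M}. Ds m)"

definition L2 :: "(real^'n \<Rightarrow> complex) \<Rightarrow> bool" where
  "L2 f \<longleftrightarrow> f \<in> borel_measurable lebesgue \<and> integrable lebesgue (\<lambda>y. (norm (f y))\<^sup>2)"

definition source_F :: "(real^'n \<Rightarrow> complex) \<Rightarrow> real^'n \<Rightarrow> real^'n \<Rightarrow> real \<Rightarrow> complex" where
  "source_F f d y k = f y * exp (\<i> * complex_of_real (k * (y \<bullet> d)))"

definition far_field :: "(real^'n) set \<Rightarrow> (real^'n \<Rightarrow> complex) \<Rightarrow> real^'n \<Rightarrow> real^'n \<Rightarrow> real \<Rightarrow> complex" where
  "far_field D f d \<theta> k =
     (LINT y:D|lebesgue. exp (- \<i> * complex_of_real (k * (\<theta> \<bullet> y))) * source_F f d y k)"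

end

theory Submission
  imports Defs "HOL-Probability.Levy" "HOL-Complex_Analysis.Cauchy_Integral_Formula"
begin

text \<open>
  Write \<open>\<omega> = (\<theta> - d) / |\<theta> - d|\<close> and let \<open>G(s)\<close> be the integral of \<open>f\<close> over the
  hyperplane \<open>{y. y \<bullet> \<omega> = s}\<close>. By Fubini in coordinates adapted to \<open>\<omega>\<close> (the Fourier
  slice theorem), \<open>u\<^sup>\<infinity>(\<theta>, k)\<close> is the one-dimensional Fourier transform of \<open>G\<close> at frequency
  \<open>k |\<theta> - d|\<close>. \<open>G\<close> is integrable and vanishes outside the interval \<open>[a, b]\<close> of values of
  \<open>y \<bullet> \<omega>\<close> on \<open>D\<close>, and the hypothesis on \<open>\<hat>f\<close> says it is almost everywhere nonzero
  inside. The Fourier transform of a compactly supported function is entire, so the data on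
  the band \<open>(0, k\<^sub>m\<^sub>a\<^sub>x |\<theta> - d|)\<close> determine it everywhere, hence determine \<open>G\<close> almost
  everywhere (Levy's uniqueness theorem), hence determine \<open>[a, b]\<close>, which is the strip.
\<close>

section \<open>Lebesgue measure on \<open>real^'n\<close>\<close>

lemma borel_measurable_linear:
  fixes f :: "'a::euclidean_space \<Rightarrow> 'b::euclidean_space"
  shows "linear f \<Longrightarrow> f \<in> borel_measurable borel"
  by (intro borel_measurable_continuous_onI linear_continuous_on) (simp add: linear_conv_bounded_linear)

lemma prod_Basis_vec:
  "(\<Prod>b\<in>(Basis::(real^'n) set). g b) = (\<Prod>i\<in>UNIV. g (axis i 1))"
proof -
  have Basis: "(Basis::(real^'n) set) = (\<lambda>i. axis i 1) ` UNIV"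
    by (auto simp: Basis_vec_def)
  have "inj (\<lambda>i::'n. axis i (1::real))"
    by (auto simp: inj_def axis_eq_axis)
  then show ?thesis unfolding Basis by (simp add: prod.reindex o_def)
qed

lemma measurable_vec_lambda_PiM:
  "vec_lambda \<in> measurable (Pi\<^sub>M UNIV (\<lambda>_. lborel)) (borel :: (real^'n) measure)"
  by (subst borel_measurable_euclidean_space)
     (auto simp: Basis_vec_def inner_axis measurable_component_singleton)

lemma distr_PiM_vec_lambda:
  "distr (Pi\<^sub>M UNIV (\<lambda>_. lborel)) borel vec_lambda = (lborel :: (real^'n) measure)"
proof (rule lborel_eqI[symmetric])
  interpret finite_product_sigma_finite "\<lambda>_::'n. lborel::real measure" UNIV
    by standard simp
  fix l u :: "real^'n"
  assume "\<And>b. b \<in> Basis \<Longrightarrow> l \<bullet> b \<le> u \<bullet> b"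
  then have le: "l $ i \<le> u $ i" for i
    by (force simp: Basis_vec_def inner_axis)
  have "vec_lambda -` box l u \<inter> space (Pi\<^sub>M UNIV (\<lambda>_. lborel)) = Pi\<^sub>E UNIV (\<lambda>i. {l$i<..<u$i})"
    by (auto simp: space_PiM mem_box_cart PiE_def extensional_def Pi_def)
  then show "emeasure (distr (Pi\<^sub>M UNIV (\<lambda>_. lborel)) borel vec_lambda) (box l u)
      = (\<Prod>b\<in>Basis. (u - l) \<bullet> b)"
    using le by (simp add: emeasure_distr[OF measurable_vec_lambda_PiM] measure_times
        prod_Basis_vec inner_axis prod_ennreal)
qed simp

lemma distr_lborel_orthogonal_transformation_wellorder:
  fixes Q :: "real^'m::{finite,wellorder} \<Rightarrow> real^'m::{finite,wellorder}"
  assumes Q: "orthogonal_transformation Q"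
  shows "distr lborel borel Q = lborel"
proof (rule lborel_eqI[symmetric])
  have mQ: "Q \<in> borel_measurable borel"
    using Q by (simp add: borel_measurable_linear orthogonal_transformation_linear)
  have Qi: "orthogonal_transformation (inv Q)"
    using Q by (simp add: orthogonal_transformation_inv)
  fix l u :: "real^'m::{finite,wellorder}"
  assume "\<And>b. b \<in> Basis \<Longrightarrow> l \<bullet> b \<le> u \<bullet> b"
  have pre: "Q -` box l u = inv Q ` box l u"
    using Q by (simp add: bij_vimage_eq_inv_image orthogonal_transformation_bij)
  have box: "box l u \<in> lmeasurable" by simp
  have "emeasure lborel (Q -` box l u) = emeasure lebesgue (Q -` box l u)"
    using mQ by (simp add: emeasure_completion measurable_sets_borel)
  also have "\<dots> = measure lebesgue (inv Q ` box l u)"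
    using measurable_orthogonal_image[OF Qi box] pre by (simp add: emeasure_eq_measure2)
  also have "\<dots> = emeasure lborel (box l u)"
    using box by (simp add: measure_orthogonal_image[OF Qi box] emeasure_eq_measure2 emeasure_completion)
  finally show "emeasure (distr lborel borel Q) (box l u) = (\<Prod>b\<in>Basis. (u - l) \<bullet> b)"
    using \<open>\<And>b. b \<in> Basis \<Longrightarrow> l \<bullet> b \<le> u \<bullet> b\<close> mQ
    by (subst emeasure_distr) (auto simp del: emeasure_lborel_box intro!: emeasure_lborel_box)
qed simp

definition vec_reindex :: "('n \<Rightarrow> 'm) \<Rightarrow> real^'n \<Rightarrow> real^'m" where
  "vec_reindex p x = (\<chi> j. x $ inv p j)"

lemma vec_reindex_nth: "bij p \<Longrightarrow> vec_reindex p x $ p i = x $ i"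
  by (simp add: vec_reindex_def bij_is_inj)

lemma linear_vec_reindex: "linear (vec_reindex p)"
  by (auto simp: vec_reindex_def linear_iff vec_eq_iff)

lemma inner_vec_reindex:
  assumes "bij (p::'n::finite \<Rightarrow> 'm::finite)"
  shows "vec_reindex p x \<bullet> vec_reindex p y = x \<bullet> y"
proof -
  have "vec_reindex p x \<bullet> vec_reindex p y = (\<Sum>i\<in>UNIV. vec_reindex p x $ p i * vec_reindex p y $ p i)"
    using assms unfolding inner_vec_def
    by (subst sum.reindex_bij_betw[symmetric, where h=p and S=UNIV]) (auto simp: bij_betw_def)
  also have "\<dots> = x \<bullet> y"
    using assms by (simp add: vec_reindex_nth inner_vec_def)
  finally show ?thesis .
qed

lemma orthogonal_transformation_vec_reindex:
  "bij (p::'n::finite \<Rightarrow> 'm::finite) \<Longrightarrow> orthogonal_transformation (vec_reindex p)"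
  by (simp add: orthogonal_transformation_def linear_vec_reindex inner_vec_reindex)

lemma vec_reindex_inv_left: "bij p \<Longrightarrow> vec_reindex (inv p) (vec_reindex p x) = x"
  by (simp add: vec_reindex_def vec_eq_iff bij_is_inj inv_inv_eq)

lemma vec_reindex_inv_right: "bij p \<Longrightarrow> vec_reindex p (vec_reindex (inv p) x) = x"
  using vec_reindex_inv_left[of "inv p" x] by (simp add: inv_inv_eq bij_imp_bij_inv)

lemma vimage_vec_reindex_box:
  assumes "bij p"
  shows "vec_reindex p -` box l u = box (\<chi> i. l $ p i) (\<chi> i. u $ p i)"
proof -
  have "(\<forall>j. l $ j < vec_reindex p x $ j \<and> vec_reindex p x $ j < u $ j)
      \<longleftrightarrow> (\<forall>i. l $ p i < vec_reindex p x $ p i \<and> vec_reindex p x $ p i < u $ p i)" for x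
    using assms by (metis bij_pointE)
  then show ?thesis
    using assms by (auto simp: mem_box_cart vec_reindex_nth)
qed

lemma distr_lborel_vec_reindex:
  assumes p: "bij (p::'n::finite \<Rightarrow> 'm::finite)"
  shows "distr lborel borel (vec_reindex p) = lborel"
proof (rule lborel_eqI[symmetric])
  fix l u :: "real^'m"
  assume "\<And>b. b \<in> Basis \<Longrightarrow> l \<bullet> b \<le> u \<bullet> b"
  then have le: "l $ j \<le> u $ j" for j
    by (force simp: Basis_vec_def inner_axis)
  have "emeasure lborel (vec_reindex p -` box l u)
      = (\<Prod>b\<in>Basis. ((\<chi> i. u $ p i) - (\<chi> i. l $ p i)) \<bullet> b)"
    unfolding vimage_vec_reindex_box[OF p] using le
    by (intro emeasure_lborel_box) (auto simp: Basis_vec_def inner_axis)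
  also have "\<dots> = (\<Prod>i\<in>UNIV. u $ p i - l $ p i)"
    by (simp add: prod_Basis_vec inner_axis)
  also have "\<dots> = (\<Prod>j\<in>UNIV. u $ j - l $ j)"
    using p by (subst prod.reindex_bij_betw[symmetric, where h=p and S=UNIV]) (auto simp: bij_betw_def)
  finally show "emeasure (distr lborel borel (vec_reindex p)) (box l u) = (\<Prod>b\<in>Basis. (u - l) \<bullet> b)"
    by (subst emeasure_distr)
       (auto simp: borel_measurable_linear linear_vec_reindex prod_Basis_vec inner_axis
         simp del: emeasure_lborel_box)
qed simp

text \<open>The library proves invariance of Lebesgue measure under orthogonal maps only for index
  types carrying a well-order; it is transferred along a relabelling of the coordinates, which is
  where the dimension hypothesis of the theorem is used.\<close>

lemma distr_lborel_orthogonal_transformation: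
  fixes Q :: "real^'n::finite \<Rightarrow> real^'n"
  assumes Q: "orthogonal_transformation Q" and p: "bij (p::'n \<Rightarrow> 'm::{finite,wellorder})"
  shows "distr lborel borel Q = lborel"
proof -
  define Q' where "Q' = vec_reindex p \<circ> Q \<circ> vec_reindex (inv p)"
  have pi: "bij (inv p)" using p by (simp add: bij_imp_bij_inv)
  have Q': "orthogonal_transformation Q'"
    unfolding Q'_def by (intro orthogonal_transformation_compose orthogonal_transformation_vec_reindex Q p pi)
  have Q_eq: "Q = vec_reindex (inv p) \<circ> Q' \<circ> vec_reindex p"
    using p by (auto simp: Q'_def fun_eq_iff vec_reindex_inv_left vec_reindex_inv_right)
  have [measurable]: "vec_reindex p \<in> borel_measurable borel" "vec_reindex (inv p) \<in> borel_measurable borel"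
      "Q' \<in> borel_measurable borel"
    using Q' by (simp_all add: borel_measurable_linear linear_vec_reindex orthogonal_transformation_linear)
  have "distr lborel borel Q
      = distr (distr (distr lborel borel (vec_reindex p)) borel Q') borel (vec_reindex (inv p))"
    by (simp add: Q_eq distr_distr comp_assoc)
  also have "\<dots> = lborel"
    using p pi Q' by (simp add: distr_lborel_vec_reindex distr_lborel_orthogonal_transformation_wellorder)
  finally show ?thesis .
qed

lemma distr_lborel_orthogonal_transformation_card_2_3:
  fixes Q :: "real^'n::finite \<Rightarrow> real^'n"
  assumes Q: "orthogonal_transformation Q" and dim: "CARD('n) = 2 \<or> CARD('n) = 3"
  shows "distr lborel borel Q = lborel"
  using dim
proof
  assume "CARD('n) = 2"
  then obtain p :: "'n \<Rightarrow> 2" where "bij p"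
    using finite_same_card_bij[of "UNIV::'n set" "UNIV::2 set"] by (auto simp: bij_betw_def bij_def)
  then show ?thesis by (rule distr_lborel_orthogonal_transformation[OF Q])
next
  assume "CARD('n) = 3"
  then obtain p :: "'n \<Rightarrow> 3" where "bij p"
    using finite_same_card_bij[of "UNIV::'n set" "UNIV::3 set"] by (auto simp: bij_betw_def bij_def)
  then show ?thesis by (rule distr_lborel_orthogonal_transformation[OF Q])
qed

definition insert_coord :: "'n \<Rightarrow> real \<times> ('n \<Rightarrow> real) \<Rightarrow> real^'n" where
  "insert_coord i0 z = (\<chi> i. if i = i0 then fst z else snd z i)"

lemma measurable_insert_coord [measurable]:
  fixes i0 :: "'n::finite"
  shows "insert_coord i0 \<in> borel_measurable (lborel \<Otimes>\<^sub>M Pi\<^sub>M (UNIV - {i0}) (\<lambda>_. lborel))"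
proof (subst borel_measurable_euclidean_space, intro ballI)
  fix b :: "real^'n" assume "b \<in> Basis"
  then obtain i where b: "b = axis i 1" by (auto simp: Basis_vec_def)
  show "(\<lambda>x. insert_coord i0 x \<bullet> b) \<in> borel_measurable (lborel \<Otimes>\<^sub>M Pi\<^sub>M (UNIV - {i0}) (\<lambda>_. lborel))"
  proof (cases "i = i0")
    case False
    then have "(\<lambda>x. snd x i) \<in> borel_measurable (lborel \<Otimes>\<^sub>M Pi\<^sub>M (UNIV - {i0}) (\<lambda>_. lborel))"
      by (intro measurable_compose[OF measurable_snd] measurable_component_singleton) simp
    then show ?thesis using False by (simp add: b insert_coord_def inner_axis)
  qed (simp add: b insert_coord_def inner_axis)
qed

lemma distr_insert_coord:
  fixes i0 :: "'n::finite"
  shows "distr (lborel \<Otimes>\<^sub>M Pi\<^sub>M (UNIV - {i0}) (\<lambda>_. lborel)) borel (insert_coord i0)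
    = (lborel :: (real^'n) measure)"
proof -
  let ?J = "UNIV - {i0}"
  let ?L = "\<lambda>_::'n. lborel :: real measure"
  let ?pick = "\<lambda>(x, y). (x i0, y)"
  interpret ps: product_sigma_finite ?L by standard
  interpret J: finite_product_sigma_finite ?L ?J by standard simp
  interpret I: finite_product_sigma_finite ?L "{i0}" by standard simp
  have U: "{i0} \<union> ?J = UNIV" by auto
  have [measurable]: "?pick \<in> measurable (Pi\<^sub>M {i0} ?L \<Otimes>\<^sub>M Pi\<^sub>M ?J ?L) (lborel \<Otimes>\<^sub>M Pi\<^sub>M ?J ?L)"
    by measurable
  have "lborel \<Otimes>\<^sub>M Pi\<^sub>M ?J ?L = distr (Pi\<^sub>M {i0} ?L) lborel (\<lambda>x. x i0) \<Otimes>\<^sub>M distr (Pi\<^sub>M ?J ?L) (Pi\<^sub>M ?J ?L) (\<lambda>x. x)"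
    by (simp add: ps.distr_singleton)
  also have "\<dots> = distr (Pi\<^sub>M {i0} ?L \<Otimes>\<^sub>M Pi\<^sub>M ?J ?L) (lborel \<Otimes>\<^sub>M Pi\<^sub>M ?J ?L) ?pick"
    by (rule pair_measure_distr) (simp_all add: measurable_component_singleton J.sigma_finite_measure_axioms)
  finally have pair: "lborel \<Otimes>\<^sub>M Pi\<^sub>M ?J ?L = distr (Pi\<^sub>M {i0} ?L \<Otimes>\<^sub>M Pi\<^sub>M ?J ?L) (lborel \<Otimes>\<^sub>M Pi\<^sub>M ?J ?L) ?pick" .
  have "insert_coord i0 (?pick z) = vec_lambda (merge {i0} ?J z)" for z :: "('n \<Rightarrow> real) \<times> ('n \<Rightarrow> real)"
    by (cases z) (auto simp: insert_coord_def merge_def vec_eq_iff)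
  then have "distr (lborel \<Otimes>\<^sub>M Pi\<^sub>M ?J ?L) borel (insert_coord i0)
      = distr (Pi\<^sub>M {i0} ?L \<Otimes>\<^sub>M Pi\<^sub>M ?J ?L) borel (vec_lambda \<circ> merge {i0} ?J)"
    by (subst pair, subst distr_distr) (auto intro!: distr_cong)
  also have "\<dots> = distr (distr (Pi\<^sub>M {i0} ?L \<Otimes>\<^sub>M Pi\<^sub>M ?J ?L) (Pi\<^sub>M UNIV ?L) (merge {i0} ?J)) borel vec_lambda"
    using measurable_merge[of "{i0}" ?J ?L] unfolding U
    by (subst distr_distr) (auto intro: measurable_vec_lambda_PiM)
  also have "\<dots> = lborel"
    using ps.distr_merge[of "{i0}" ?J] by (simp add: U distr_PiM_vec_lambda)
  finally show ?thesis .
qed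

section \<open>Fourier transforms on the real line\<close>

definition fourier :: "(real \<Rightarrow> complex) \<Rightarrow> real \<Rightarrow> complex" where
  "fourier h t = (\<integral>s. h s * exp (- \<i> * of_real (t * s)) \<partial>lborel)"

lemma norm_exp_minus_i_times [simp]: "norm (exp (- \<i> * complex_of_real t)) = 1"
  using norm_exp_i_times[of "- t"] by simp

lemma integrable_mult_exp_minus_i_times:
  fixes F :: "'a::euclidean_space \<Rightarrow> complex"
  assumes F: "integrable lborel F" and [measurable]: "g \<in> borel_measurable borel"
  shows "integrable lborel (\<lambda>y. F y * exp (- \<i> * of_real (g y)))"
proof -
  have [measurable]: "F \<in> borel_measurable borel" using F by auto
  show ?thesis
    by (rule Bochner_Integration.integrable_bound[OF integrable_norm[OF F]]) (auto simp: norm_mult)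
qed

lemma integrable_fourier_integrand:
  "integrable lborel h \<Longrightarrow> integrable lborel (\<lambda>s. h s * exp (- \<i> * of_real (t * s)))"
  by (rule integrable_mult_exp_minus_i_times) simp_all

lemma fourier_diff:
  assumes "integrable lborel h" "integrable lborel h'"
  shows "fourier (\<lambda>s. h s - h' s) t = fourier h t - fourier h' t"
  using integrable_fourier_integrand[OF assms(1)] integrable_fourier_integrand[OF assms(2)]
  by (simp add: fourier_def left_diff_distrib)

lemma fourier_cnj: "fourier (\<lambda>s. cnj (h s)) t = cnj (fourier h (- t))"
proof -
  have eq: "cnj (h s * exp (- \<i> * of_real (- t * s))) = cnj (h s) * exp (- \<i> * of_real (t * s))" for s
    by (simp add: exp_cnj)
  show ?thesis
    unfolding fourier_def Bochner_Integration.integral_cnj[symmetric] eq ..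
qed

lemma fourier_Re:
  assumes h: "integrable lborel h"
  shows "fourier (\<lambda>s. of_real (Re (h s))) t = (fourier h t + cnj (fourier h (- t))) / 2"
proof -
  let ?e = "\<lambda>s. exp (- \<i> * of_real (t * s))"
  have "of_real (Re z) * w = (z * w + cnj z * w) / 2" for z w
    by (simp add: complex_add_cnj flip: distrib_right)
  then have "fourier (\<lambda>s. of_real (Re (h s))) t = (\<integral>s. (h s * ?e s + cnj (h s) * ?e s) / 2 \<partial>lborel)"
    by (simp only: fourier_def)
  also have "\<dots> = (fourier h t + fourier (\<lambda>s. cnj (h s)) t) / 2"
    using integrable_fourier_integrand[OF h] integrable_fourier_integrand[of "\<lambda>s. cnj (h s)"] h
    by (simp add: fourier_def)
  finally show ?thesis by (simp add: fourier_cnj)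
qed

lemma fourier_Im:
  assumes h: "integrable lborel h"
  shows "fourier (\<lambda>s. of_real (Im (h s))) t = (fourier h t - cnj (fourier h (- t))) / (2 * \<i>)"
proof -
  let ?e = "\<lambda>s. exp (- \<i> * of_real (t * s))"
  have "of_real (Im z) * w = (z * w - cnj z * w) / (2 * \<i>)" for z w
  proof -
    have "z * w - cnj z * w = (z - cnj z) * w" by (simp add: algebra_simps)
    also have "\<dots> = 2 * \<i> * (of_real (Im z) * w)" by (simp add: complex_diff_cnj algebra_simps)
    finally show ?thesis by simp
  qed
  then have "fourier (\<lambda>s. of_real (Im (h s))) t = (\<integral>s. (h s * ?e s - cnj (h s) * ?e s) / (2 * \<i>) \<partial>lborel)"
    by (simp only: fourier_def)
  also have "\<dots> = (fourier h t - fourier (\<lambda>s. cnj (h s)) t) / (2 * \<i>)"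
    using integrable_fourier_integrand[OF h] integrable_fourier_integrand[of "\<lambda>s. cnj (h s)"] h
    by (simp add: fourier_def)
  finally show ?thesis by (simp add: fourier_cnj)
qed

lemma fourier_unique_nonneg:
  fixes p q :: "real \<Rightarrow> real"
  assumes p: "integrable lborel p" and q: "integrable lborel q"
    and p0: "\<And>x. p x \<ge> 0" and q0: "\<And>x. q x \<ge> 0"
    and eq: "\<And>t. fourier (\<lambda>x. of_real (p x)) t = fourier (\<lambda>x. of_real (q x)) t"
  shows "AE x in lborel. p x = q x"
proof -
  have [measurable]: "p \<in> borel_measurable borel" "q \<in> borel_measurable borel"
    using p q by auto
  define m where "m = (\<integral>x. p x \<partial>lborel)"
  have m_q: "m = (\<integral>x. q x \<partial>lborel)"
    using eq[of 0] by (simp add: fourier_def m_def)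
  show ?thesis
  proof (cases "m = 0")
    case True
    have "AE x in lborel. p x = 0"
      using True p p0 by (simp add: m_def integral_nonneg_eq_0_iff_AE)
    moreover have "AE x in lborel. q x = 0"
      using True q q0 m_q by (simp add: integral_nonneg_eq_0_iff_AE)
    ultimately show ?thesis by eventually_elim simp
  next
    case False
    then have m: "m > 0" using p0 by (simp add: m_def order_neq_le_trans)
    let ?P = "\<lambda>r. density lborel (\<lambda>x. ennreal (r x / m))"
    have distribution: "real_distribution (?P r)"
      if r: "integrable lborel r" "\<And>x. r x \<ge> 0" "(\<integral>x. r x \<partial>lborel) = m" for r
    proof -
      have [measurable]: "r \<in> borel_measurable borel" using r by auto
      have "emeasure (?P r) UNIV = ennreal (\<integral>x. r x / m \<partial>lborel)"
        using r m by (simp add: emeasure_density nn_integral_eq_integral)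
      also have "\<dots> = 1" using r m by simp
      finally show ?thesis
        by (intro real_distribution.intro prob_spaceI real_distribution_axioms.intro) auto
    qed
    have char: "char (?P r) t = fourier (\<lambda>x. of_real (r x)) (- t) / m"
      if r: "integrable lborel r" "\<And>x. r x \<ge> 0" for r t
    proof -
      have [measurable]: "r \<in> borel_measurable borel" using r by auto
      have "char (?P r) t = (\<integral>x. (r x / m) *\<^sub>R iexp (t * x) \<partial>lborel)"
        unfolding char_def using r m by (subst integral_density) auto
      also have "\<dots> = fourier (\<lambda>x. of_real (r x)) (- t) / m"
        by (simp add: fourier_def scaleR_conv_of_real)
      finally show ?thesis .
    qed
    have "char (?P p) = char (?P q)"
      using p q p0 q0 eq by (simp add: fun_eq_iff char)
    then have "?P p = ?P q"
      using p q p0 q0 m_q by (intro Levy_uniqueness distribution) (auto simp: m_def)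
    then have "AE x in lborel. ennreal (p x / m) = ennreal (q x / m)"
      by (intro sigma_finite_measure.density_unique[OF sigma_finite_lborel]) auto
    then show ?thesis
      by eventually_elim (use m p0 q0 in auto)
  qed
qed

lemma fourier_unique_real:
  fixes g :: "real \<Rightarrow> real"
  assumes g: "integrable lborel g" and zero: "\<And>t. fourier (\<lambda>x. of_real (g x)) t = 0"
  shows "AE x in lborel. g x = 0"
proof -
  define p where "p x = max (g x) 0" for x
  define q where "q x = max (- g x) 0" for x
  have pq: "integrable lborel p" "integrable lborel q"
    unfolding p_def q_def using g by (auto intro!: integrable_max)
  have g_pq: "g x = p x - q x" for x by (simp add: p_def q_def max_def)
  have "fourier (\<lambda>x. of_real (p x)) t = fourier (\<lambda>x. of_real (q x)) t" for t
    using zero[of t] fourier_diff[of "\<lambda>x. of_real (p x)" "\<lambda>x. of_real (q x)" t] pq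
    by (simp add: g_pq)
  then have "AE x in lborel. p x = q x"
    by (intro fourier_unique_nonneg pq) (auto simp: p_def q_def)
  then show ?thesis by eventually_elim (simp add: g_pq)
qed

lemma fourier_unique:
  assumes h: "integrable lborel h" and zero: "\<And>t. fourier h t = 0"
  shows "AE x in lborel. h x = 0"
proof -
  have "AE x in lborel. Re (h x) = 0"
    using h by (intro fourier_unique_real) (simp_all add: fourier_Re zero)
  moreover have "AE x in lborel. Im (h x) = 0"
    using h by (intro fourier_unique_real) (simp_all add: fourier_Im zero)
  ultimately show ?thesis by eventually_elim (simp add: complex_eq_iff)
qed

lemma fourier_power_series:
  fixes h :: "real \<Rightarrow> complex" and z :: complex
  assumes h: "integrable lborel h" and R: "R \<ge> 0" and supp: "\<And>s. \<bar>s\<bar> > R \<Longrightarrow> h s = 0"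
  shows "(\<lambda>n. (\<integral>s. h s * (- \<i> * of_real s) ^ n / fact n \<partial>lborel) * z ^ n)
           sums (\<integral>s. h s * exp (- \<i> * z * of_real s) \<partial>lborel)"
proof -
  define g where "g n s = h s * (- \<i> * of_real s) ^ n / fact n * z ^ n" for n s
  define c where "c n = (R * norm z) ^ n / fact n" for n
  have [measurable]: "h \<in> borel_measurable borel" using h by auto
  have bound: "norm (g n s) \<le> norm (h s) * c n" for n s
  proof (cases "\<bar>s\<bar> > R")
    case False
    then have "norm ((- \<i> * of_real s) ^ n * z ^ n) \<le> (R * norm z) ^ n"
      by (simp add: norm_mult norm_power power_mult_distrib[symmetric] power_mono mult_right_mono)
    then have "norm (h s) * (norm ((- \<i> * of_real s) ^ n * z ^ n) / fact n) \<le> norm (h s) * c n"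
      unfolding c_def by (intro mult_left_mono divide_right_mono) simp_all
    then show ?thesis by (simp add: g_def norm_mult norm_divide)
  qed (simp add: g_def supp)
  have c_summable: "summable c"
    using summable_exp[of "R * norm z"] unfolding c_def[abs_def] by (simp add: divide_inverse mult.commute)
  have c_nonneg: "c n \<ge> 0" for n
    using R by (simp add: c_def)
  have g_integrable: "integrable lborel (g n)" for n
  proof (rule Bochner_Integration.integrable_bound[OF integrable_mult_left[OF integrable_norm[OF h], of "c n"]])
    show "g n \<in> borel_measurable lborel"
      unfolding g_def by measurable
    show "AE s in lborel. norm (g n s) \<le> norm (norm (h s) * c n)"
      using bound c_nonneg by (simp add: abs_mult)
  qed
  have g_sums: "(\<lambda>n. g n s) sums (h s * exp (- \<i> * z * of_real s))" for s
  proof -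
    have w: "- \<i> * z * of_real s = z * (- \<i> * of_real s)"
      by (simp add: algebra_simps)
    have pw: "(- \<i> * z * of_real s) ^ n = z ^ n * (- \<i> * of_real s) ^ n" for n
      unfolding w by (rule power_mult_distrib)
    have "g n s = h s * ((- \<i> * z * of_real s) ^ n /\<^sub>R fact n)" for n
      unfolding g_def pw scaleR_conv_of_real by (simp add: divide_inverse mult_ac)
    then show ?thesis
      using sums_mult[OF exp_converges[of "- \<i> * z * of_real s"], of "h s"] by simp
  qed
  have "(\<lambda>n. integral\<^sup>L lborel (g n)) sums (\<integral>s. (\<Sum>n. g n s) \<partial>lborel)"
  proof (rule sums_integral[OF g_integrable])
    show "AE s in lborel. summable (\<lambda>n. norm (g n s))"
      using bound by (intro AE_I2 summable_comparison_test[OF _ summable_mult[OF c_summable]]) auto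
    have "norm (\<integral>s. norm (g n s) \<partial>lborel) \<le> (\<integral>s. norm (h s) \<partial>lborel) * c n" for n
    proof -
      have "norm (\<integral>s. norm (g n s) \<partial>lborel) = (\<integral>s. norm (g n s) \<partial>lborel)"
        by (simp add: integral_nonneg_AE)
      also have "\<dots> \<le> (\<integral>s. norm (h s) * c n \<partial>lborel)"
        using g_integrable h bound by (intro integral_mono) auto
      finally show ?thesis by simp
    qed
    then show "summable (\<lambda>n. \<integral>s. norm (g n s) \<partial>lborel)"
      by (intro summable_comparison_test[OF _ summable_mult[OF c_summable]]) auto
  qed
  moreover have "(\<Sum>n. g n s) = h s * exp (- \<i> * z * of_real s)" for s
    using g_sums by (simp add: sums_iff)
  moreover have "integral\<^sup>L lborel (g n) = (\<integral>s. h s * (- \<i> * of_real s) ^ n / fact n \<partial>lborel) * z ^ n" for n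
    by (simp add: g_def[abs_def])
  ultimately show ?thesis by simp
qed

lemma fourier_vanishing_on_interval:
  fixes h :: "real \<Rightarrow> complex"
  assumes h: "integrable lborel h" and supp: "\<And>s. \<bar>s\<bar> > R \<Longrightarrow> h s = 0"
    and "l1 < l2" and zero: "\<And>t. t \<in> {l1<..<l2} \<Longrightarrow> fourier h t = 0"
  shows "fourier h t = 0"
proof -
  define l0 where "l0 = (l1 + l2) / 2"
  define r where "r = (l2 - l1) / 2"
  have r: "r > 0" using \<open>l1 < l2\<close> by (simp add: r_def)
  define h0 where "h0 s = h s * exp (- \<i> * of_real (l0 * s))" for s
  define a where "a n = (\<integral>s. h0 s * (- \<i> * of_real s) ^ n / fact n \<partial>lborel)" for n
  define F where "F z = (\<integral>s. h0 s * exp (- \<i> * z * of_real s) \<partial>lborel)" for z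
  have F_sums: "(\<lambda>n. a n * z ^ n) sums F z" for z
    unfolding a_def F_def
  proof (rule fourier_power_series)
    show "integrable lborel h0"
      unfolding h0_def[abs_def] by (rule integrable_fourier_integrand[OF h])
    show "h0 s = 0" if "\<bar>s\<bar> > \<bar>R\<bar>" for s
      using that supp by (simp add: h0_def)
  qed simp
  have F_real: "F (of_real \<mu>) = fourier h (l0 + \<mu>)" for \<mu>
  proof -
    have "exp (- \<i> * of_real (l0 * s)) * exp (- \<i> * of_real \<mu> * of_real s) = exp (- \<i> * of_real ((l0 + \<mu>) * s))" for s
      by (simp add: exp_add[symmetric] algebra_simps)
    then show ?thesis by (simp add: F_def h0_def fourier_def mult.assoc)
  qed
  have F_zero: "F (of_real \<mu>) = 0" if "\<bar>\<mu>\<bar> < r" for \<mu>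
    unfolding F_real using that by (intro zero) (auto simp: l0_def r_def abs_less_iff field_simps)
  have F0: "F 0 = 0"
    using F_zero[of 0] r by simp
  \<comment> \<open>Zeros of a nonzero power series are isolated, so vanishing on a real segment through the
    centre forces every coefficient to vanish.\<close>
  have "a n = 0" for n
  proof (rule ccontr)
    assume an: "a n \<noteq> 0"
    have "a 0 = F 0"
      using F_sums[of 0] by (simp add: sums_iff)
    then have "n > 0"
      using an F0 by (cases n) auto
    obtain \<rho> where \<rho>: "0 < \<rho>" and nz: "\<And>z. z \<in> cball 0 \<rho> - {0} \<Longrightarrow> F z \<noteq> 0"
    proof (rule powser_0_nonzero[where r=1 and \<xi>=0 and a=a and f=F and m=n])
      show "(\<lambda>n. a n * (x - 0) ^ n) sums F x" for x
        using F_sums[of x] by simp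
    qed (use F0 an \<open>n > 0\<close> in auto)
    define m where "m = min \<rho> r / 2"
    have "m > 0" "m \<le> \<rho>" "m < r" using \<rho> r by (auto simp: m_def)
    then show False using nz[of "of_real m"] F_zero[of m] by simp
  qed
  then have "F (of_real (t - l0)) = 0"
    using F_sums[of "of_real (t - l0)"] by (simp add: sums_iff)
  then have "fourier h (l0 + (t - l0)) = 0"
    by (simp only: F_real)
  then show ?thesis by simp
qed

lemma fourier_eq_on_interval_imp_AE_eq:
  fixes h h' :: "real \<Rightarrow> complex"
  assumes h: "integrable lborel h" "\<And>s. s \<notin> {a..b} \<Longrightarrow> h s = 0"
    and h': "integrable lborel h'" "\<And>s. s \<notin> {a'..b'} \<Longrightarrow> h' s = 0"
    and "l1 < l2" and eq: "\<And>t. t \<in> {l1<..<l2} \<Longrightarrow> fourier h t = fourier h' t"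
  shows "AE s in lborel. h s = h' s"
proof -
  have "fourier (\<lambda>s. h s - h' s) t = 0" for t
  proof (rule fourier_vanishing_on_interval[OF _ _ \<open>l1 < l2\<close>])
    show "integrable lborel (\<lambda>s. h s - h' s)"
      using h(1) h'(1) by simp
    show "h s - h' s = 0" if "\<bar>s\<bar> > \<bar>a\<bar> + \<bar>b\<bar> + \<bar>a'\<bar> + \<bar>b'\<bar>" for s
    proof -
      have "s \<notin> {a..b}" "s \<notin> {a'..b'}"
        using that by auto
      then show ?thesis by (simp add: h(2) h'(2))
    qed
    show "fourier (\<lambda>s. h s - h' s) t = 0" if "t \<in> {l1<..<l2}" for t
      using eq[OF that] by (simp add: fourier_diff h(1) h'(1))
  qed
  then have "AE s in lborel. h s - h' s = 0"
    using h(1) h'(1) by (intro fourier_unique) simp_all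
  then show ?thesis by eventually_elim simp
qed

section \<open>Integration over parallel hyperplanes\<close>

text \<open>\<open>chart (s, x)\<close> runs through the hyperplane \<open>{y. y \<bullet> \<omega> = s}\<close> as \<open>x\<close> runs through the
  remaining coordinates; this is the parametrisation used in \<open>hplane_integral\<close>.\<close>

locale hyperplane_chart =
  fixes Q :: "real^'n::finite \<Rightarrow> real^'n" and i0 :: 'n and \<omega> :: "real^'n"
  assumes orthogonal: "orthogonal_transformation Q" and normal: "Q (axis i0 1) = \<omega>"
    and distr_lborel: "distr lborel borel Q = lborel"
begin

abbreviation slices :: "('n \<Rightarrow> real) measure" where
  "slices \<equiv> Pi\<^sub>M (UNIV - {i0}) (\<lambda>_. lborel)"

definition chart :: "real \<times> ('n \<Rightarrow> real) \<Rightarrow> real^'n" where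
  "chart z = Q (insert_coord i0 z)"

sublocale slices: pair_sigma_finite lborel slices
proof -
  interpret finite_product_sigma_finite "\<lambda>_. lborel::real measure" "UNIV - {i0}"
    by standard simp
  show "pair_sigma_finite lborel slices" ..
qed

lemma measurable_chart [measurable]: "chart \<in> borel_measurable (lborel \<Otimes>\<^sub>M slices)"
  unfolding chart_def
  using measurable_comp[OF measurable_insert_coord
      borel_measurable_linear[OF orthogonal_transformation_linear[OF orthogonal]]]
  by (simp add: o_def)

lemma distr_chart: "distr (lborel \<Otimes>\<^sub>M slices) borel chart = lborel"
proof -
  have "Q \<in> borel_measurable borel"
    by (simp add: borel_measurable_linear orthogonal_transformation_linear orthogonal)
  moreover have "chart = Q \<circ> insert_coord i0"
    by (simp add: fun_eq_iff chart_def)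
  ultimately have "distr (lborel \<Otimes>\<^sub>M slices) borel chart
      = distr (distr (lborel \<Otimes>\<^sub>M slices) borel (insert_coord i0)) borel Q"
    by (simp add: distr_distr)
  then show ?thesis by (simp add: distr_insert_coord distr_lborel)
qed

lemma inner_chart_normal [simp]: "chart (s, x) \<bullet> \<omega> = s"
proof -
  have "chart (s, x) \<bullet> \<omega> = insert_coord i0 (s, x) \<bullet> axis i0 1"
    using orthogonal normal unfolding chart_def by (metis orthogonal_transformation_def)
  then show ?thesis by (simp add: insert_coord_def inner_axis)
qed

definition slice_integral :: "(real^'n \<Rightarrow> complex) \<Rightarrow> real \<Rightarrow> complex" where
  "slice_integral F s = (\<integral>x. F (chart (s, x)) \<partial>slices)"

lemma
  assumes F: "integrable lborel F"
  shows integrable_slice_integral: "integrable lborel (slice_integral F)"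
    and integral_slice_integral: "(\<integral>y. F y \<partial>lborel) = (\<integral>s. slice_integral F s \<partial>lborel)"
proof -
  have mF [measurable]: "F \<in> borel_measurable borel" using F by auto
  have i: "integrable (lborel \<Otimes>\<^sub>M slices) (\<lambda>z. F (chart z))"
    using integrable_distr_eq[OF measurable_chart, of F] F by (simp add: distr_chart)
  then show "integrable lborel (slice_integral F)"
    unfolding slice_integral_def by (rule slices.integrable_fst'[unfolded split_beta' fst_conv snd_conv])
  have "(\<integral>y. F y \<partial>lborel) = (\<integral>z. F (chart z) \<partial>(lborel \<Otimes>\<^sub>M slices))"
    using integral_distr[OF measurable_chart mF] by (simp only: distr_chart)
  also have "\<dots> = (\<integral>s. slice_integral F s \<partial>lborel)"
    using slices.integral_fst'[OF i] by (simp add: slice_integral_def)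
  finally show "(\<integral>y. F y \<partial>lborel) = (\<integral>s. slice_integral F s \<partial>lborel)" .
qed

lemma AE_slices:
  assumes "AE y in lborel. P y"
  shows "AE s in lborel. AE x in slices. P (chart (s, x))"
proof -
  have "AE y in distr (lborel \<Otimes>\<^sub>M slices) borel chart. P y"
    unfolding distr_chart by (rule assms)
  then show ?thesis
    by (intro slices.AE_pair AE_distrD[OF measurable_chart])
qed

lemma slice_integral_eq_0: "(\<And>y. y \<bullet> \<omega> = s \<Longrightarrow> F y = 0) \<Longrightarrow> slice_integral F s = 0"
  by (simp add: slice_integral_def)

text \<open>The integrability guard matters: a slice of \<open>F\<close> need not even be measurable, and then
  its integral is the junk value \<open>0\<close>.\<close>

lemma AE_slice_integral_eq:
  assumes "AE y in lborel. F y = F' y" and [measurable]: "F' \<in> borel_measurable borel"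
  shows "AE s in lborel. integrable slices (\<lambda>x. F (chart (s, x))) \<longrightarrow> slice_integral F s = slice_integral F' s"
  using AE_slices[OF assms(1)]
proof eventually_elim
  case (elim s)
  show ?case
  proof
    assume "integrable slices (\<lambda>x. F (chart (s, x)))"
    then show "slice_integral F s = slice_integral F' s"
      unfolding slice_integral_def using elim
      by (intro integral_cong_AE) (auto intro: measurable_Pair2)
  qed
qed

theorem fourier_slice:
  assumes F: "integrable lborel F"
  shows "(\<integral>y. F y * exp (- \<i> * of_real (t * (y \<bullet> \<omega>))) \<partial>lborel) = fourier (slice_integral F) t"
proof -
  have "(\<integral>y. F y * exp (- \<i> * of_real (t * (y \<bullet> \<omega>))) \<partial>lborel)
      = (\<integral>s. slice_integral (\<lambda>y. F y * exp (- \<i> * of_real (t * (y \<bullet> \<omega>)))) s \<partial>lborel)"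
    by (intro integral_slice_integral integrable_mult_exp_minus_i_times F) simp
  also have "\<dots> = fourier (slice_integral F) t"
    by (simp add: fourier_def slice_integral_def)
  finally show ?thesis .
qed

end

section \<open>The far field as a one-dimensional Fourier transform\<close>

text \<open>Note the sign: \<open>hplane \<omega> \<tau>\<close> is the hyperplane \<open>{y. y \<bullet> \<omega> = - \<tau>}\<close>.\<close>

lemma fhat_eq_slice_integral:
  fixes \<omega> :: "real^'n::finite"
  assumes \<omega>: "norm \<omega> = 1" and dim: "CARD('n) = 2 \<or> CARD('n) = 3"
  obtains Q i0 where "hyperplane_chart Q i0 \<omega>"
    and "\<And>f s. fhat \<omega> f (- s) = hyperplane_chart.slice_integral Q i0 f s"
proof -
  define i0 :: 'n where "i0 = (SOME i::'n. True)"
  define Q where "Q = (SOME Q::real^'n\<Rightarrow>real^'n. orthogonal_transformation Q \<and> Q (axis i0 1) = \<omega>)"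
  have "\<exists>Q::real^'n\<Rightarrow>real^'n. orthogonal_transformation Q \<and> Q (axis i0 1) = \<omega>"
    using orthogonal_transformation_exists_1[of "axis i0 (1::real)" \<omega>] \<omega> by auto
  then have Q: "orthogonal_transformation Q" "Q (axis i0 1) = \<omega>"
    unfolding Q_def by (metis (mono_tags, lifting) someI_ex)+
  then interpret hyperplane_chart Q i0 \<omega>
    using distr_lborel_orthogonal_transformation_card_2_3[OF _ dim] by unfold_locales auto
  have "fhat \<omega> f (- s) = slice_integral f s" for f s
    unfolding fhat_def hplane_integral_def Let_def i0_def[symmetric] Q_def[symmetric]
    by (simp only: slice_integral_def chart_def insert_coord_def minus_minus fst_conv snd_conv)
  then show ?thesis
    using that hyperplane_chart_axioms by blast
qed

lemma AE_lborel_uminus: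
  assumes "AE x in lborel. P x"
  shows "AE x in lborel. P (- x :: real)"
proof -
  have "AE x in distr lborel borel uminus. P x"
    unfolding lborel_distr_uminus by (rule assms)
  then show ?thesis by (rule AE_distrD[rotated]) simp
qed

lemma lebesgue_measurable_AE_eq_borel:
  fixes f :: "'a::euclidean_space \<Rightarrow> complex"
  assumes "f \<in> borel_measurable lebesgue"
  obtains g where "g \<in> borel_measurable borel" "AE x in lborel. f x = g x"
proof -
  have "(\<lambda>x. Re (f x)) \<in> borel_measurable (completion lborel)" using assms by measurable
  then obtain g1 where g1: "g1 \<in> borel_measurable lborel" "AE x in lborel. Re (f x) = g1 x"
    using completion_ex_borel_measurable_real by blast
  have "(\<lambda>x. Im (f x)) \<in> borel_measurable (completion lborel)" using assms by measurable
  then obtain g2 where g2: "g2 \<in> borel_measurable lborel" "AE x in lborel. Im (f x) = g2 x"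
    using completion_ex_borel_measurable_real by blast
  have [measurable]: "g1 \<in> borel_measurable borel" "g2 \<in> borel_measurable borel" using g1 g2 by auto
  show ?thesis
  proof (rule that[of "\<lambda>x. Complex (g1 x) (g2 x)"])
    show "(\<lambda>x. Complex (g1 x) (g2 x)) \<in> borel_measurable borel"
      by (subst borel_measurable_complex_iff) simp
    show "AE x in lborel. f x = Complex (g1 x) (g2 x)"
      using g1(2) g2(2) by eventually_elim (simp add: complex_eq_iff)
  qed
qed

lemma L2_bounded_support_representative:
  fixes f :: "real^'n::finite \<Rightarrow> complex"
  assumes f: "L2 f" and U: "bounded U" and [measurable]: "U \<in> sets borel"
    and supp: "\<And>y. y \<notin> U \<Longrightarrow> f y = 0"
  obtains f0 where "f0 \<in> borel_measurable borel" "integrable lborel f0"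
    "\<And>y. y \<notin> U \<Longrightarrow> f0 y = 0" "AE y in lborel. f y = f0 y"
proof -
  obtain g where [measurable]: "g \<in> borel_measurable borel" and fg: "AE y in lborel. f y = g y"
    using lebesgue_measurable_AE_eq_borel f by (auto simp: L2_def)
  define f0 where "f0 y = (if y \<in> U then g y else 0)" for y
  have f0_measurable [measurable]: "f0 \<in> borel_measurable borel"
    unfolding f0_def by measurable
  have f0_supp: "f0 y = 0" if "y \<notin> U" for y
    using that by (simp add: f0_def)
  have ff0: "AE y in lborel. f y = f0 y"
    using fg by eventually_elim (use supp in \<open>auto simp: f0_def\<close>)
  have "integrable lebesgue (\<lambda>y. (norm (f0 y))\<^sup>2)"
  proof (rule integrable_cong_AE_imp)
    show "integrable lebesgue (\<lambda>y. (norm (f y))\<^sup>2)"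
      using f by (simp add: L2_def)
    show "AE y in lebesgue. (norm (f y))\<^sup>2 = (norm (f0 y))\<^sup>2"
      using ff0 unfolding AE_completion_iff by eventually_elim simp
  qed (intro measurable_completion; simp)
  then have square_integrable: "integrable lborel (\<lambda>y. (norm (f0 y))\<^sup>2)"
    by (simp add: integrable_completion)
  \<comment> \<open>On a set of finite measure, square integrability implies integrability: \<open>|z| \<le> 1 + |z|\<^sup>2\<close>.\<close>
  have "integrable lborel (indicator U :: _ \<Rightarrow> real)"
    using emeasure_bounded_finite[OF U] by (simp add: integrable_indicator_iff)
  then have "integrable lborel f0"
  proof (rule Bochner_Integration.integrable_bound[OF Bochner_Integration.integrable_add[OF _ square_integrable]])
    have "norm z \<le> 1 + (norm z)\<^sup>2" for z :: complex
      using zero_le_power2[of "norm z - 1/2"] by (simp add: power2_eq_square algebra_simps)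
    then show "AE y in lborel. norm (f0 y) \<le> norm (indicator U y + (norm (f0 y))\<^sup>2)"
      by (intro AE_I2) (simp add: f0_supp indicator_def)
  qed simp
  with f0_measurable f0_supp ff0 show ?thesis
    using that by blast
qed

lemma plane_wave_product:
  assumes "\<theta> - d = c *\<^sub>R \<omega>"
  shows "exp (- \<i> * complex_of_real (k * (\<theta> \<bullet> y))) * (w * exp (\<i> * complex_of_real (k * (y \<bullet> d))))
       = w * exp (- \<i> * complex_of_real (k * c * (y \<bullet> \<omega>)))"
proof -
  have "(\<theta> - d) \<bullet> y = c * (y \<bullet> \<omega>)"
    by (simp only: assms inner_scaleR_left inner_commute[of \<omega> y])
  then have "k * (\<theta> \<bullet> y) - k * (y \<bullet> d) = k * c * (y \<bullet> \<omega>)"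
    by (simp add: inner_diff_left inner_commute[of y d] flip: right_diff_distrib)
  then have "- \<i> * complex_of_real (k * (\<theta> \<bullet> y)) + \<i> * complex_of_real (k * (y \<bullet> d))
      = - \<i> * complex_of_real (k * c * (y \<bullet> \<omega>))"
    by (simp flip: of_real_diff add: algebra_simps)
  then show ?thesis
    by (simp add: mult.left_commute flip: exp_add)
qed

lemma far_field_eq_plane_wave_integral:
  assumes c: "\<theta> - d = c *\<^sub>R \<omega>" and [measurable]: "U \<in> sets borel"
    and f: "f \<in> borel_measurable lebesgue" and [measurable]: "f0 \<in> borel_measurable borel"
    and f0_supp: "\<And>y. y \<notin> U \<Longrightarrow> f0 y = 0" and ff0: "AE y in lborel. f y = f0 y"
  shows "far_field U f d \<theta> k = (\<integral>y. f0 y * exp (- \<i> * of_real (k * c * (y \<bullet> \<omega>))) \<partial>lborel)"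
proof -
  let ?F = "\<lambda>y. f0 y * exp (- \<i> * of_real (k * c * (y \<bullet> \<omega>)))"
  have "far_field U f d \<theta> k
      = (\<integral>y. indicator U y *\<^sub>R (exp (- \<i> * of_real (k * (\<theta> \<bullet> y))) * source_F f d y k) \<partial>lebesgue)"
    by (simp add: far_field_def set_lebesgue_integral_def)
  also have "\<dots> = (\<integral>y. ?F y \<partial>lebesgue)"
  proof (rule integral_cong_AE)
    have [measurable]: "f \<in> borel_measurable lebesgue" by (rule f)
    have [measurable]: "(\<lambda>y. indicator U y *\<^sub>R exp (- \<i> * of_real (k * (\<theta> \<bullet> y))) * exp (\<i> * of_real (k * (y \<bullet> d))))
        \<in> borel_measurable lebesgue"
      by (intro measurable_completion) measurable
    have "(\<lambda>y. (indicator U y *\<^sub>R exp (- \<i> * of_real (k * (\<theta> \<bullet> y))) * exp (\<i> * of_real (k * (y \<bullet> d)))) * f y)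
        \<in> borel_measurable lebesgue"
      by measurable
    then show "(\<lambda>y. indicator U y *\<^sub>R (exp (- \<i> * of_real (k * (\<theta> \<bullet> y))) * source_F f d y k))
        \<in> borel_measurable lebesgue"
      by (simp add: source_F_def mult_ac)
    show "?F \<in> borel_measurable lebesgue"
      by (intro measurable_completion) simp
    show "AE y in lebesgue. indicator U y *\<^sub>R (exp (- \<i> * of_real (k * (\<theta> \<bullet> y))) * source_F f d y k) = ?F y"
      unfolding AE_completion_iff using ff0
    proof eventually_elim
      case (elim y)
      then show ?case
        using plane_wave_product[OF c, of k y "f0 y"]
        by (cases "y \<in> U") (simp_all add: source_F_def f0_supp)
    qed
  qed
  also have "\<dots> = (\<integral>y. ?F y \<partial>lborel)"
    by (rule integral_completion) simp
  finally show ?thesis .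
qed

lemma
  fixes U :: "'a::real_inner set"
  assumes "bounded U"
  shows bdd_below_inner_image: "bdd_below ((\<lambda>z. z \<bullet> \<omega>) ` U)"
    and bdd_above_inner_image: "bdd_above ((\<lambda>z. z \<bullet> \<omega>) ` U)"
proof -
  obtain B where B: "\<And>z. z \<in> U \<Longrightarrow> norm z \<le> B" using assms by (auto simp: bounded_iff)
  have "\<bar>z \<bullet> \<omega>\<bar> \<le> B * norm \<omega>" if "z \<in> U" for z
    using Cauchy_Schwarz_ineq2[of z \<omega>] B[OF that] by (meson mult_right_mono norm_ge_zero order_trans)
  then have "\<And>z. z \<in> U \<Longrightarrow> - (B * norm \<omega>) \<le> z \<bullet> \<omega> \<and> z \<bullet> \<omega> \<le> B * norm \<omega>"
    by (metis abs_le_D1 abs_le_D2 minus_le_iff)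
  then show "bdd_below ((\<lambda>z. z \<bullet> \<omega>) ` U)" "bdd_above ((\<lambda>z. z \<bullet> \<omega>) ` U)"
    by (intro bdd_belowI2 bdd_aboveI2, blast)+
qed

lemma inner_between_Inf_Sup:
  fixes U :: "'a::real_inner set"
  assumes "bounded U" "z \<in> U"
  shows "(INF y\<in>U. y \<bullet> \<omega>) \<le> z \<bullet> \<omega> \<and> z \<bullet> \<omega> \<le> (SUP y\<in>U. y \<bullet> \<omega>)"
  using cINF_lower[OF bdd_below_inner_image[OF assms(1)] assms(2)]
    cSUP_upper[OF assms(2) bdd_above_inner_image[OF assms(1)]] by simp

lemma Inf_inner_less_Sup_inner:
  fixes U :: "'a::real_inner set"
  assumes "open U" "bounded U" "U \<noteq> {}" "norm \<omega> = 1"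
  shows "(INF z\<in>U. z \<bullet> \<omega>) < (SUP z\<in>U. z \<bullet> \<omega>)"
proof -
  obtain y e where "y \<in> U" "e > 0" "ball y e \<subseteq> U"
    using assms(1,3) open_contains_ball by blast
  then have y: "y - (e/2) *\<^sub>R \<omega> \<in> U" "y + (e/2) *\<^sub>R \<omega> \<in> U"
    using assms(4) by (auto intro!: subsetD[OF \<open>ball y e \<subseteq> U\<close>] simp: dist_norm)
  have "(INF z\<in>U. z \<bullet> \<omega>) \<le> (y - (e/2) *\<^sub>R \<omega>) \<bullet> \<omega>"
    using inner_between_Inf_Sup[OF assms(2) y(1)] by simp
  also have "\<dots> < (y + (e/2) *\<^sub>R \<omega>) \<bullet> \<omega>"
    using \<open>e > 0\<close> assms(4) by (simp add: inner_diff_left inner_add_left dot_square_norm power2_eq_square)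
  also have "\<dots> \<le> (SUP z\<in>U. z \<bullet> \<omega>)"
    using inner_between_Inf_Sup[OF assms(2) y(2)] by simp
  finally show ?thesis .
qed

lemma admissible_domain_union_dom:
  assumes "admissible_domain Ds M"
  shows "open (union_dom Ds M)" "bounded (union_dom Ds M)" "union_dom Ds M \<noteq> {}"
  using assms by (force simp: admissible_domain_def union_dom_def bounded_domain_def)+

lemma not_AE_notin_Ioo:
  assumes "a < b"
  shows "\<not> (AE s in lborel. s \<notin> {a<..<b::real})"
proof
  assume "AE s in lborel. s \<notin> {a<..<b}"
  then obtain N where "{s \<in> space lborel. \<not> s \<notin> {a<..<b}} \<subseteq> N" "emeasure lborel N = 0" "N \<in> sets lborel"
    by (rule AE_E)
  then have "emeasure lborel {a<..<b} \<le> emeasure lborel N"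
    by (intro emeasure_mono) auto
  with \<open>emeasure lborel N = 0\<close> have "emeasure lborel {a<..<b} = 0"
    by simp
  then show False using assms by simp
qed

lemma AE_nonzero_interval_subset:
  fixes G G' :: "real \<Rightarrow> complex"
  assumes "a < b" and nonzero: "AE s in lborel. s \<in> {a..b} \<longrightarrow> G s \<noteq> 0"
    and zero': "\<And>s. s \<notin> {a'..b'} \<Longrightarrow> G' s = 0" and eq: "AE s in lborel. G s = G' s"
  shows "a' \<le> a \<and> b \<le> b'"
proof -
  have gap: "AE s in lborel. s \<notin> {a..b} - {a'..b'}"
    using nonzero eq by eventually_elim (use zero' in auto)
  have "a' \<le> a"
  proof (rule ccontr)
    assume "\<not> a' \<le> a"
    then have "{a<..<min a' b} \<subseteq> {a..b} - {a'..b'}" by auto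
    with gap have "AE s in lborel. s \<notin> {a<..<min a' b}"
      by (auto elim: AE_mp)
    then show False using not_AE_notin_Ioo[of a "min a' b"] \<open>a < b\<close> \<open>\<not> a' \<le> a\<close> by simp
  qed
  moreover have "b \<le> b'"
  proof (rule ccontr)
    assume "\<not> b \<le> b'"
    then have "{max b' a<..<b} \<subseteq> {a..b} - {a'..b'}" by auto
    with gap have "AE s in lborel. s \<notin> {max b' a<..<b}"
      by (auto elim: AE_mp)
    then show False using not_AE_notin_Ioo[of "max b' a" b] \<open>a < b\<close> \<open>\<not> b \<le> b'\<close> by simp
  qed
  ultimately show ?thesis ..
qed

lemma AE_eq_imp_support_interval_eq:
  fixes G G' :: "real \<Rightarrow> complex"
  assumes G: "a < b" "AE s in lborel. s \<in> {a..b} \<longrightarrow> G s \<noteq> 0" "\<And>s. s \<notin> {a..b} \<Longrightarrow> G s = 0"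
    and G': "a' < b'" "AE s in lborel. s \<in> {a'..b'} \<longrightarrow> G' s \<noteq> 0" "\<And>s. s \<notin> {a'..b'} \<Longrightarrow> G' s = 0"
    and eq: "AE s in lborel. G s = G' s"
  shows "a = a' \<and> b = b'"
proof -
  have "AE s in lborel. G' s = G s"
    using eq by eventually_elim simp
  from AE_nonzero_interval_subset[OF G'(1,2) G(3) this]
  have "a \<le> a' \<and> b' \<le> b" .
  moreover have "a' \<le> a \<and> b \<le> b'"
    by (rule AE_nonzero_interval_subset[OF G(1,2) G'(3) eq])
  ultimately show ?thesis by auto
qed

lemma far_field_as_fourier_transform:
  fixes Ds :: "nat \<Rightarrow> (real^'n::finite) set" and f :: "real^'n \<Rightarrow> complex"
  assumes dim: "CARD('n) = 2 \<or> CARD('n) = 3"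
    and \<omega>: "norm \<omega> = 1" and c: "\<theta> - d = c *\<^sub>R \<omega>"
    and D: "admissible_domain Ds M" and f: "L2 f"
    and supp: "\<forall>y. y \<notin> union_dom Ds M \<longrightarrow> f y = 0"
    and null: "{\<tau>. hplane \<omega> \<tau> \<subseteq> strip (union_dom Ds M) \<omega> \<and> fhat \<omega> f \<tau> = 0} \<in> null_sets lebesgue"
  obtains G where "integrable lborel G"
    and "\<And>k. far_field (union_dom Ds M) f d \<theta> k = fourier G (k * c)"
    and "\<And>s. s \<notin> {(INF z\<in>union_dom Ds M. z \<bullet> \<omega>)..(SUP z\<in>union_dom Ds M. z \<bullet> \<omega>)} \<Longrightarrow> G s = 0"
    and "AE s in lborel. s \<in> {(INF z\<in>union_dom Ds M. z \<bullet> \<omega>)..(SUP z\<in>union_dom Ds M. z \<bullet> \<omega>)} \<longrightarrow> G s \<noteq> 0"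
proof -
  define U where "U = union_dom Ds M"
  define a where "a = (INF z\<in>U. z \<bullet> \<omega>)"
  define b where "b = (SUP z\<in>U. z \<bullet> \<omega>)"
  have "bounded U" and U_borel [measurable]: "U \<in> sets borel"
    using admissible_domain_union_dom[OF D] by (auto simp: U_def)
  obtain Q i0 where chart: "hyperplane_chart Q i0 \<omega>"
    and fhat_slice: "\<And>f s. fhat \<omega> f (- s) = hyperplane_chart.slice_integral Q i0 f s"
    using fhat_eq_slice_integral[OF \<omega> dim] by blast
  interpret hyperplane_chart Q i0 \<omega> by (fact chart)
  obtain f0 where f0_borel [measurable]: "f0 \<in> borel_measurable borel" and f0: "integrable lborel f0"
    and f0_supp: "\<And>y. y \<notin> U \<Longrightarrow> f0 y = 0" and ff0: "AE y in lborel. f y = f0 y"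
    by (rule L2_bounded_support_representative[OF f \<open>bounded U\<close> U_borel]) (use supp in \<open>auto simp: U_def\<close>)
  have "far_field U f d \<theta> k = fourier (slice_integral f0) (k * c)" for k
  proof -
    have "far_field U f d \<theta> k = (\<integral>y. f0 y * exp (- \<i> * of_real (k * c * (y \<bullet> \<omega>))) \<partial>lborel)"
      by (rule far_field_eq_plane_wave_integral[OF c U_borel _ _ f0_supp ff0]) (use f in \<open>simp_all add: L2_def\<close>)
    also have "\<dots> = fourier (slice_integral f0) (k * c)"
      by (rule fourier_slice[OF f0])
    finally show ?thesis .
  qed
  moreover have "slice_integral f0 s = 0" if "s \<notin> {a..b}" for s
    using inner_between_Inf_Sup[OF \<open>bounded U\<close>] that
    by (intro slice_integral_eq_0 f0_supp) (auto simp: a_def b_def)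
  moreover have "AE s in lborel. s \<in> {a..b} \<longrightarrow> slice_integral f0 s \<noteq> 0"
  proof -
    let ?N = "{\<tau>. hplane \<omega> \<tau> \<subseteq> strip U \<omega> \<and> fhat \<omega> f \<tau> = 0}"
    have "AE \<tau> in lborel. \<tau> \<notin> ?N"
      using AE_not_in[OF null] by (simp add: AE_completion_iff U_def)
    then have "AE s in lborel. - s \<notin> ?N"
      by (rule AE_lborel_uminus)
    with AE_slice_integral_eq[OF ff0 f0_borel] show ?thesis
    proof eventually_elim
      case (elim s)
      show ?case
      proof
        assume "s \<in> {a..b}"
        then have "hplane \<omega> (- s) \<subseteq> strip U \<omega>"
          by (auto simp: hplane_def strip_def a_def b_def)
        then have nonzero: "slice_integral f s \<noteq> 0"
          using elim(2) fhat_slice by auto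
        then have "integrable slices (\<lambda>x. f (chart (s, x)))"
          unfolding slice_integral_def using not_integrable_integral_eq by blast
        then show "slice_integral f0 s \<noteq> 0"
          using elim(1) nonzero by simp
      qed
    qed
  qed
  ultimately show ?thesis
    using that[of "slice_integral f0"] integrable_slice_integral[OF f0]
    unfolding U_def a_def b_def by blast
qed

theorem theorem2p4:
  fixes Ds Ds' :: "nat \<Rightarrow> (real^'n) set" and M M' :: nat
    and f f' :: "real^'n \<Rightarrow> complex" and d \<theta> :: "real^'n" and kmax :: real
  assumes dim: "CARD('n) = 2 \<or> CARD('n) = 3"
    and kmax: "kmax > 0"
    and d: "norm d = 1" and \<theta>: "norm \<theta> = 1" and \<theta>d: "\<theta> \<noteq> d"
    and D: "admissible_domain Ds M"
    and f: "L2 f" and f_supp: "\<forall>y. y \<notin> union_dom Ds M \<longrightarrow> f y = 0"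
    and f_null: "{\<tau>. hplane ((1 / norm (\<theta> - d)) *\<^sub>R (\<theta> - d)) \<tau>
                        \<subseteq> strip (union_dom Ds M) ((1 / norm (\<theta> - d)) *\<^sub>R (\<theta> - d))
                     \<and> fhat ((1 / norm (\<theta> - d)) *\<^sub>R (\<theta> - d)) f \<tau> = 0} \<in> null_sets lebesgue"
    and D': "admissible_domain Ds' M'"
    and f': "L2 f'" and f'_supp: "\<forall>y. y \<notin> union_dom Ds' M' \<longrightarrow> f' y = 0"
    and f'_null: "{\<tau>. hplane ((1 / norm (\<theta> - d)) *\<^sub>R (\<theta> - d)) \<tau>
                        \<subseteq> strip (union_dom Ds' M') ((1 / norm (\<theta> - d)) *\<^sub>R (\<theta> - d))
                     \<and> fhat ((1 / norm (\<theta> - d)) *\<^sub>R (\<theta> - d)) f' \<tau> = 0} \<in> null_sets lebesgue"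
    and same: "\<forall>k\<in>{0<..<kmax}. far_field (union_dom Ds M) f d \<theta> k
                                = far_field (union_dom Ds' M') f' d \<theta> k"
  shows "strip (union_dom Ds M) ((1 / norm (\<theta> - d)) *\<^sub>R (\<theta> - d))
       = strip (union_dom Ds' M') ((1 / norm (\<theta> - d)) *\<^sub>R (\<theta> - d))"
proof -
  define c where "c = norm (\<theta> - d)"
  define \<omega> where "\<omega> = (1 / norm (\<theta> - d)) *\<^sub>R (\<theta> - d)"
  have c: "c > 0" "\<theta> - d = c *\<^sub>R \<omega>" and \<omega>: "norm \<omega> = 1"
    using \<theta>d by (auto simp: c_def \<omega>_def)
  define a where "a = (INF z\<in>union_dom Ds M. z \<bullet> \<omega>)"
  define b where "b = (SUP z\<in>union_dom Ds M. z \<bullet> \<omega>)"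
  define a' where "a' = (INF z\<in>union_dom Ds' M'. z \<bullet> \<omega>)"
  define b' where "b' = (SUP z\<in>union_dom Ds' M'. z \<bullet> \<omega>)"
  obtain G where G: "integrable lborel G"
      "\<And>k. far_field (union_dom Ds M) f d \<theta> k = fourier G (k * c)"
      "\<And>s. s \<notin> {a..b} \<Longrightarrow> G s = 0" "AE s in lborel. s \<in> {a..b} \<longrightarrow> G s \<noteq> 0"
    unfolding a_def b_def
    by (rule far_field_as_fourier_transform[OF dim \<omega> c(2) D f f_supp f_null[folded \<omega>_def]]) blast
  obtain G' where G': "integrable lborel G'"
      "\<And>k. far_field (union_dom Ds' M') f' d \<theta> k = fourier G' (k * c)"
      "\<And>s. s \<notin> {a'..b'} \<Longrightarrow> G' s = 0" "AE s in lborel. s \<in> {a'..b'} \<longrightarrow> G' s \<noteq> 0"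
    unfolding a'_def b'_def
    by (rule far_field_as_fourier_transform[OF dim \<omega> c(2) D' f' f'_supp f'_null[folded \<omega>_def]]) blast
  have "a < b" "a' < b'"
    using Inf_inner_less_Sup_inner[OF admissible_domain_union_dom[OF D] \<omega>]
      Inf_inner_less_Sup_inner[OF admissible_domain_union_dom[OF D'] \<omega>]
    by (simp_all add: a_def b_def a'_def b'_def)
  \<comment> \<open>The data fix the Fourier transforms of the two slice functions on the frequency band
    \<open>(0, c kmax)\<close>, and compactly supported functions are determined by such a band.\<close>
  have "AE s in lborel. G s = G' s"
  proof (rule fourier_eq_on_interval_imp_AE_eq[OF G(1,3) G'(1,3)])
    show "0 < kmax * c"
      using kmax c(1) by simp
    show "fourier G t = fourier G' t" if "t \<in> {0<..<kmax * c}" for t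
      using same[rule_format, of "t / c"] that c(1) by (simp add: G(2) G'(2) field_simps)
  qed
  then have "a = a'" "b = b'"
    using AE_eq_imp_support_interval_eq[OF \<open>a < b\<close> G(4,3) \<open>a' < b'\<close> G'(4,3)] by auto
  then show ?thesis
    unfolding \<omega>_def[symmetric] strip_def a_def b_def a'_def b'_def by simp
qed

end
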